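(* For every integer $q\ge 6$ there exists an $\mathcal{SOS}_q(2)$ of period $\frac{(q-2)(q-4)}{2}$ if $q\equiv 0\pmod 4$, $\frac{(q-1)(q-5)}{2}$ if $q\equiv 1\pmod 4$, $\frac{(q-2)(q-6)}{2}$ if $q\equiv 2\pmod 4$, and $\frac{(q-1)(q-3)}{2}$ if $q\equiv 3\pmod 4$.
   Context: For a periodic sequence $S=(s_i)$ over $\mathbb{Z}_q$ write $\mathbf{s}_n(i)=(s_i,\ldots,s_{i+n-1})$; $\mathbf{u}^R$ denotes the reverse of a tuple and $-\mathbf{u}$ its termwise negative. An $\mathcal{SOS}_q(n)$ is a periodic sequence of period $m$ over $\mathbb{Z}_q$ such that $\mathbf{s}_n(i)=\mathbf{s}_n(j)$ implies $i\equiv j\pmod m$, and $\mathbf{s}_n(i)\neq\mathbf{s}_n(j)^R$ and $\mathbf{s}_n(i)\neq-\mathbf{s}_n(j)^R$ for all $i,j$. *)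

theory Defs
  imports Main
begin

text \<open>A periodic sequence over Z_q of period m is represented by one period,
  a list xs of length m with entries in {0..<q}; s_i = xs ! (i mod m).
  Since windows depend only on i mod m, quantifying over i, j < m is
  equivalent to quantifying over all i, j.\<close>

definition win :: "int list \<Rightarrow> nat \<Rightarrow> nat \<Rightarrow> int list" where
  "win xs n i = map (\<lambda>k. xs ! ((i + k) mod length xs)) [0..<n]"

definition negq :: "int \<Rightarrow> int list \<Rightarrow> int list" where
  "negq q u = map (\<lambda>x. (- x) mod q) u"

definition is_SOS :: "int \<Rightarrow> nat \<Rightarrow> int list \<Rightarrow> bool" where
  "is_SOS q n xs \<longleftrightarrow>
     set xs \<subseteq> {0..<q} \<and>
     (\<forall>i<length xs. \<forall>j<length xs. win xs n i = win xs n j \<longrightarrow> i = j) \<and>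
     (\<forall>i<length xs. \<forall>j<length xs. win xs n i \<noteq> rev (win xs n j)) \<and>
     (\<forall>i<length xs. \<forall>j<length xs. win xs n i \<noteq> negq q (rev (win xs n j)))"

end

theory Submission
  imports Defs "Graph_Theory.Euler"
begin

text \<open>
  Let \<open>n = \<lfloor>(q - 1) / 2\<rfloor>\<close> and \<open>K = \<lfloor>(n - 1) / 2\<rfloor>\<close>. On \<open>\<int>\<^sub>n \<times> {+, -}\<close> draw an arc
  from \<open>(i, s)\<close> to \<open>(j, t)\<close> whenever \<open>j - i \<in> {1, \<dots>, K}\<close> modulo \<open>n\<close>, whatever the signs.
  This digraph is connected and every vertex has in- and out-degree \<open>2K\<close>, so it has
  an Eulerian circuit through all of its \<open>4nK\<close> arcs. Encode \<open>(i, \<plusminus>)\<close> as \<open>\<plusminus>(i + 1)\<close> in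
  \<open>\<int>\<^sub>q\<close>: this is injective because \<open>2n < q\<close>, and negation just flips the sign. The
  encoded tails of the circuit form a cyclic sequence whose 2-windows are the encoded
  arcs, each exactly once. Because \<open>2K < n\<close>, the digraph has no pair of arcs
  \<open>i \<rightarrow> j\<close> and \<open>j \<rightarrow> i\<close> on the index level, so no window is the reverse, or the negated
  reverse, of another one. Finally \<open>4nK\<close> is the claimed period in each residue class
  of \<open>q\<close> modulo 4.
\<close>

lemma win_2: "i < length xs \<Longrightarrow> win xs 2 i = [xs ! i, rotate1 xs ! i]"
  by (simp add: win_def upt_rec nth_rotate1)

definition rev_neg_free :: "int \<Rightarrow> (int \<times> int) set \<Rightarrow> bool" where
  "rev_neg_free q A \<longleftrightarrow> (\<forall>(a, b) \<in> A. (b, a) \<notin> A \<and> ((- b) mod q, (- a) mod q) \<notin> A)"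

lemma is_SOS_2_Nil: "is_SOS q 2 []"
  by (simp add: is_SOS_def)

text \<open>\<^term>\<open>zip xs (rotate1 xs)\<close> lists the cyclic 2-windows of \<^term>\<open>xs\<close> as pairs.\<close>

lemma is_SOS_2I:
  assumes "set xs \<subseteq> {0..<q}"
    and "distinct (zip xs (rotate1 xs))"
    and "rev_neg_free q (set (zip xs (rotate1 xs)))"
  shows "is_SOS q 2 xs"
proof -
  let ?P = "zip xs (rotate1 xs)"
  have win: "win xs 2 i = [fst (?P ! i), snd (?P ! i)]" if "i < length xs" for i
    using that by (simp add: win_2)
  have mem: "?P ! i \<in> set ?P" if "i < length xs" for i
    using that by (intro nth_mem) simp
  show ?thesis
    unfolding is_SOS_def
  proof (intro conjI allI impI)
    fix i j assume ij: "i < length xs" "j < length xs" and "win xs 2 i = win xs 2 j"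
    then have "?P ! i = ?P ! j" by (simp add: win)
    with assms(2) ij show "i = j"
      by (simp only: nth_eq_iff_index_eq length_zip length_rotate1 min.idem)
  next
    fix i j assume "i < length xs" "j < length xs"
    then show "win xs 2 i \<noteq> rev (win xs 2 j)"
      using assms(3) win mem unfolding rev_neg_free_def by (fastforce simp: prod_eq_iff)
  next
    fix i j assume "i < length xs" "j < length xs"
    then show "win xs 2 i \<noteq> negq q (rev (win xs 2 j))"
      using assms(3) win mem unfolding rev_neg_free_def by (fastforce simp: negq_def prod_eq_iff)
  qed (fact assms(1))
qed

lemma pcas_Cons_map_snd: "pcas u p v \<Longrightarrow> u # map snd p = map fst p @ [v]"
  by (induction u p v rule: pcas.induct) auto

lemma closed_pcas_rotate1: "pcas u p u \<Longrightarrow> rotate1 (map fst p) = map snd p"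
  using pcas_Cons_map_snd[of u p u] by (cases p) auto

lemma (in pair_fin_digraph) is_SOS_2_of_eulerian:
  assumes "connected G"
    and "\<And>v. v \<in> pverts G \<Longrightarrow> in_degree G v = out_degree G v"
    and "inj_on enc (pverts G)" "enc ` pverts G \<subseteq> {0..<q}"
    and "rev_neg_free q (map_prod enc enc ` parcs G)"
  shows "\<exists>xs. is_SOS q 2 xs \<and> length xs = card (parcs G)"
proof -
  obtain u p where "euler_trail u p u"
    using closed_euler1 assms(1,2) by auto
  then have p: "distinct p" "set p = parcs G" "pcas u p u"
    by (auto simp: euler_trail_def trail_def awalk_def)
  define xs where "xs = map (enc \<circ> fst) p"
  have "rotate1 xs = map (enc \<circ> snd) p"
    using closed_pcas_rotate1[OF p(3)] by (metis xs_def map_map rotate1_map)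
  then have pairs: "zip xs (rotate1 xs) = map (map_prod enc enc) p"
    by (simp add: xs_def zip_map_map zip_same_conv_map map_prod_def case_prod_beta)
  have "set xs \<subseteq> {0..<q}"
    using assms(4) p(2) by (fastforce simp: xs_def dest: in_arcsD1)
  moreover have "inj_on (map_prod enc enc) (parcs G)"
    using map_prod_inj_on[OF assms(3) assms(3)] wellformed'
    by (auto intro: inj_on_subset)
  then have "distinct (zip xs (rotate1 xs))"
    using p(1,2) by (simp add: pairs distinct_map)
  moreover have "rev_neg_free q (set (zip xs (rotate1 xs)))"
    using assms(5) p(2) by (simp add: pairs)
  ultimately have "is_SOS q 2 xs" by (rule is_SOS_2I)
  moreover have "length xs = card (parcs G)"
    using distinct_card[OF p(1)] p(2) by (simp add: xs_def)
  ultimately show ?thesis by blast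
qed

lemma card_mod_diff_in:
  fixes n i :: int
  assumes "D \<subseteq> {0..<n}"
  shows card_mod_diff_right_in: "card {j \<in> {0..<n}. (j - i) mod n \<in> D} = card D"
    and card_mod_diff_left_in: "card {j \<in> {0..<n}. (i - j) mod n \<in> D} = card D"
proof -
  have "bij_betw (\<lambda>j. (j - i) mod n) {j \<in> {0..<n}. (j - i) mod n \<in> D} D"
    by (rule bij_betw_byWitness[where f' = "\<lambda>d. (d + i) mod n"])
      (use assms in \<open>auto simp: mod_simps\<close>)
  then show "card {j \<in> {0..<n}. (j - i) mod n \<in> D} = card D"
    by (rule bij_betw_same_card)
  have "bij_betw (\<lambda>j. (i - j) mod n) {j \<in> {0..<n}. (i - j) mod n \<in> D} D"
    by (rule bij_betw_byWitness[where f' = "\<lambda>d. (i - d) mod n"])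
      (use assms in \<open>auto simp: mod_simps\<close>)
  then show "card {j \<in> {0..<n}. (i - j) mod n \<in> D} = card D"
    by (rule bij_betw_same_card)
qed

lemma (in fin_digraph) card_arcs_eq_sum_out_degree:
  "card (arcs G) = (\<Sum>v\<in>verts G. out_degree G v)"
proof -
  have "arcs G = (\<Union>v\<in>verts G. out_arcs G v)"
    by (auto simp: out_arcs_def)
  also have "card \<dots> = (\<Sum>v\<in>verts G. card (out_arcs G v))"
    by (rule card_UN_disjoint) (auto simp: out_arcs_def)
  finally show ?thesis
    by (simp add: out_degree_def)
qed

definition doubled_circulant :: "nat \<Rightarrow> nat \<Rightarrow> (int \<times> bool) pair_pre_digraph" where
  "doubled_circulant n K =
    \<lparr>pverts = {0..<int n} \<times> UNIV,
     parcs = {((i, s), (j, t)). i \<in> {0..<int n} \<and> j \<in> {0..<int n} \<and> (j - i) mod int n \<in> {1..int K}}\<rparr>"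

lemma pair_fin_digraph_doubled_circulant: "pair_fin_digraph (doubled_circulant n K)"
proof
  let ?G = "doubled_circulant n K"
  show "finite (pverts ?G)" by (simp add: doubled_circulant_def)
  show "finite (parcs ?G)"
    by (rule finite_subset[of _ "pverts ?G \<times> pverts ?G"]) (auto simp: doubled_circulant_def)
qed (auto simp: doubled_circulant_def)

lemma out_degree_doubled_circulant:
  assumes "K < n" "v \<in> pverts (doubled_circulant n K)"
  shows "out_degree (doubled_circulant n K) v = 2 * K"
proof -
  obtain i s where v: "v = (i, s)" "i \<in> {0..<int n}"
    using assms(2) by (auto simp: doubled_circulant_def)
  let ?J = "{j \<in> {0..<int n}. (j - i) mod int n \<in> {1..int K}}"
  have "out_arcs (doubled_circulant n K) v = Pair v ` (?J \<times> UNIV)"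
    using v by (auto simp: out_arcs_def doubled_circulant_def)
  moreover have "card ?J = K"
    using assms(1) by (subst card_mod_diff_right_in) auto
  ultimately show ?thesis
    by (simp add: out_degree_def card_image inj_on_def card_cartesian_product)
qed

lemma in_degree_doubled_circulant:
  assumes "K < n" "v \<in> pverts (doubled_circulant n K)"
  shows "in_degree (doubled_circulant n K) v = 2 * K"
proof -
  obtain i s where v: "v = (i, s)" "i \<in> {0..<int n}"
    using assms(2) by (auto simp: doubled_circulant_def)
  let ?J = "{j \<in> {0..<int n}. (i - j) mod int n \<in> {1..int K}}"
  have "in_arcs (doubled_circulant n K) v = (\<lambda>u. (u, v)) ` (?J \<times> UNIV)"
    using v by (auto simp: in_arcs_def doubled_circulant_def)
  moreover have "card ?J = K"
    using assms(1) by (subst card_mod_diff_left_in) auto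
  ultimately show ?thesis
    by (simp add: in_degree_def card_image inj_on_def card_cartesian_product)
qed

lemma card_parcs_doubled_circulant:
  assumes "K < n"
  shows "card (parcs (doubled_circulant n K)) = 4 * n * K"
proof -
  interpret pair_fin_digraph "doubled_circulant n K"
    by (rule pair_fin_digraph_doubled_circulant)
  have "card (parcs (doubled_circulant n K)) = (\<Sum>v\<in>pverts (doubled_circulant n K). 2 * K)"
    using card_arcs_eq_sum_out_degree out_degree_doubled_circulant[OF assms] by simp
  then show ?thesis
    by (simp add: doubled_circulant_def card_cartesian_product)
qed

lemma reachable_doubled_circulant:
  assumes "1 \<le> K" "2 \<le> n"
    and "u \<in> pverts (doubled_circulant n K)" "v \<in> pverts (doubled_circulant n K)"
  shows "u \<rightarrow>\<^sup>*\<^bsub>doubled_circulant n K\<^esub> v"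
proof -
  interpret pair_fin_digraph "doubled_circulant n K"
    by (rule pair_fin_digraph_doubled_circulant)
  obtain i s j t where u: "u = (i, s)" "i \<in> {0..<int n}" and v: "v = (j, t)" "j \<in> {0..<int n}"
    using assms(3,4) by (auto simp: doubled_circulant_def)
  have step: "((i', s'), ((i' + 1) mod int n, t')) \<in> parcs (doubled_circulant n K)"
    if "i' \<in> {0..<int n}" for i' s' t'
    using that assms(1,2) by (simp add: doubled_circulant_def mod_simps)
  have walk: "u \<rightarrow>\<^sup>*\<^bsub>doubled_circulant n K\<^esub> ((i + 1 + int k) mod int n, t')" for k t'
  proof (induction k arbitrary: t')
    case 0
    show ?case using step[of i s t'] u by auto
  next
    case (Suc k)
    have "(((i + 1 + int k) mod int n, True), (((i + 1 + int k) mod int n + 1) mod int n, t'))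
        \<in> parcs (doubled_circulant n K)"
      using assms(2) by (intro step) simp
    with Suc.IH[of True]
    have "u \<rightarrow>\<^sup>*\<^bsub>doubled_circulant n K\<^esub> (((i + 1 + int k) mod int n + 1) mod int n, t')"
      by (rule reachable_adj_trans)
    then show ?case by (simp add: mod_simps ac_simps)
  qed
  have "(i + 1 + int (nat ((j - i - 1) mod int n))) mod int n = j"
    using assms(2) v(2) by (simp add: mod_simps)
  then show ?thesis using walk[of "nat ((j - i - 1) mod int n)" t] v(1) by simp
qed

lemma connected_doubled_circulant:
  assumes "1 \<le> K" "2 \<le> n"
  shows "connected (doubled_circulant n K)"
proof -
  interpret pair_fin_digraph "doubled_circulant n K"
    by (rule pair_fin_digraph_doubled_circulant)
  have "pverts (doubled_circulant n K) \<noteq> {}"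
    using assms(2) by (auto simp: doubled_circulant_def)
  then show ?thesis
    unfolding connected_def strongly_connected_def
    using reachable_doubled_circulant[OF assms] reachable_mk_symmetricI by auto
qed

lemma doubled_circulant_no_back_arc:
  assumes "2 * K < n" "((i, s), (j, t)) \<in> parcs (doubled_circulant n K)"
  shows "((j, s'), (i, t')) \<notin> parcs (doubled_circulant n K)"
proof
  assume "((j, s'), (i, t')) \<in> parcs (doubled_circulant n K)"
  then have "0 < (j - i) mod int n + (i - j) mod int n"
    and "(j - i) mod int n + (i - j) mod int n < int n"
    using assms by (auto simp: doubled_circulant_def)
  moreover have "((j - i) mod int n + (i - j) mod int n) mod int n = 0"
    by (simp add: mod_simps)
  ultimately show False by simp
qed

fun signed_enc :: "int \<Rightarrow> int \<times> bool \<Rightarrow> int" where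
  "signed_enc q (i, s) = (if s then i + 1 else - (i + 1)) mod q"

lemma neg_signed_enc: "(- signed_enc q (i, s)) mod q = signed_enc q (i, \<not> s)"
  by (cases s) (simp_all add: mod_minus_eq add.commute)

lemma inj_on_signed_enc:
  assumes "2 * int n < q"
  shows "inj_on (signed_enc q) ({0..<int n} \<times> UNIV)"
proof -
  have "(i + 1) mod q = i + 1" "(- (i + 1)) mod q = q - (i + 1)" if "i \<in> {0..<int n}" for i
    using that assms by (simp, subst zmod_zminus1_eq_if, simp)
  then show ?thesis
    using assms by (auto simp: inj_on_def split: if_splits)
qed

lemma rev_neg_free_doubled_circulant:
  assumes "2 * K < n" "2 * int n < q"
  shows "rev_neg_free q (map_prod (signed_enc q) (signed_enc q) ` parcs (doubled_circulant n K))"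
proof -
  let ?G = "doubled_circulant n K" and ?enc = "signed_enc q"
  have V: "pverts ?G = {0..<int n} \<times> UNIV" by (simp add: doubled_circulant_def)
  interpret pair_fin_digraph ?G by (rule pair_fin_digraph_doubled_circulant)
  have inj: "inj_on (map_prod ?enc ?enc) (pverts ?G \<times> pverts ?G)"
    using inj_on_signed_enc[OF assms(2)] by (simp add: V map_prod_inj_on)
  have arc_iff: "(?enc u, ?enc v) \<in> map_prod ?enc ?enc ` parcs ?G \<longleftrightarrow> (u, v) \<in> parcs ?G"
    if "u \<in> pverts ?G" "v \<in> pverts ?G" for u v
    using inj_on_image_mem_iff[OF inj, of "(u, v)" "parcs ?G"] that wellformed'
    by (auto simp: subset_iff)
  show ?thesis
    unfolding rev_neg_free_def
  proof
    fix x assume "x \<in> map_prod ?enc ?enc ` parcs ?G"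
    then obtain i s j t where x: "x = (?enc (i, s), ?enc (j, t))"
      and arc: "((i, s), (j, t)) \<in> parcs ?G"
      by auto
    then have "(i, b) \<in> pverts ?G" "(j, b) \<in> pverts ?G" for b
      by (auto simp: V dest: wellformed')
    moreover have "((j, t), (i, s)) \<notin> parcs ?G" "((j, \<not> t), (i, \<not> s)) \<notin> parcs ?G"
      using doubled_circulant_no_back_arc[OF assms(1) arc] by auto
    ultimately show "case x of (a, b) \<Rightarrow>
        (b, a) \<notin> map_prod ?enc ?enc ` parcs ?G \<and>
        ((- b) mod q, (- a) mod q) \<notin> map_prod ?enc ?enc ` parcs ?G"
      by (simp add: x arc_iff neg_signed_enc del: signed_enc.simps)
  qed
qed

lemma exists_SOS_2_doubled_circulant:
  assumes "2 * K < n" "2 * int n < q"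
  shows "\<exists>xs. is_SOS q 2 xs \<and> length xs = 4 * n * K"
proof (cases "K = 0")
  case True
  then show ?thesis using is_SOS_2_Nil by auto
next
  case False
  interpret pair_fin_digraph "doubled_circulant n K"
    by (rule pair_fin_digraph_doubled_circulant)
  have "\<exists>xs. is_SOS q 2 xs \<and> length xs = card (parcs (doubled_circulant n K))"
  proof (rule is_SOS_2_of_eulerian)
    show "connected (doubled_circulant n K)"
      using False assms(1) by (intro connected_doubled_circulant) auto
    show "in_degree (doubled_circulant n K) v = out_degree (doubled_circulant n K) v"
      if "v \<in> pverts (doubled_circulant n K)" for v
      using that assms(1) in_degree_doubled_circulant out_degree_doubled_circulant by simp
    show "inj_on (signed_enc q) (pverts (doubled_circulant n K))"
      using inj_on_signed_enc[OF assms(2)] by (simp add: doubled_circulant_def)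
    show "signed_enc q ` pverts (doubled_circulant n K) \<subseteq> {0..<q}"
      using assms(2) by (auto simp: doubled_circulant_def)
    show "rev_neg_free q (map_prod (signed_enc q) (signed_enc q) ` parcs (doubled_circulant n K))"
      using assms by (rule rev_neg_free_doubled_circulant)
  qed
  then show ?thesis
    using assms(1) by (simp add: card_parcs_doubled_circulant)
qed

lemma period_by_residue_mod_4:
  fixes q :: int
  defines "n \<equiv> (q - 1) div 2"
  shows "4 * n * ((n - 1) div 2) =
      (if q mod 4 = 0 then (q - 2) * (q - 4) div 2
       else if q mod 4 = 1 then (q - 1) * (q - 5) div 2
       else if q mod 4 = 2 then (q - 2) * (q - 6) div 2
       else (q - 1) * (q - 3) div 2)"
proof -
  define t where "t = q div 4"
  consider "q = 4 * t" | "q = 4 * t + 1" | "q = 4 * t + 2" | "q = 4 * t + 3"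
    unfolding t_def by linarith
  then show ?thesis
  proof cases
    case 1
    then have "n = 2 * t - 1" "(n - 1) div 2 = t - 1" unfolding n_def by presburger+
    moreover have "(q - 2) * (q - 4) = 2 * (4 * (2 * t - 1) * (t - 1))"
      using 1 by (simp add: algebra_simps)
    ultimately show ?thesis using 1 by simp
  next
    case 2
    then have "n = 2 * t" "(n - 1) div 2 = t - 1" unfolding n_def by presburger+
    moreover have "(q - 1) * (q - 5) = 2 * (4 * (2 * t) * (t - 1))"
      using 2 by (simp add: algebra_simps)
    ultimately show ?thesis using 2 by simp
  next
    case 3
    then have "n = 2 * t" "(n - 1) div 2 = t - 1" unfolding n_def by presburger+
    moreover have "(q - 2) * (q - 6) = 2 * (4 * (2 * t) * (t - 1))"
      using 3 by (simp add: algebra_simps)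
    ultimately show ?thesis using 3 by simp
  next
    case 4
    then have "n = 2 * t + 1" "(n - 1) div 2 = t" unfolding n_def by presburger+
    moreover have "(q - 1) * (q - 3) = 2 * (4 * (2 * t + 1) * t)"
      using 4 by (simp add: algebra_simps)
    ultimately show ?thesis using 4 by simp
  qed
qed

theorem corollary3p20:
  fixes q :: int
  assumes "q \<ge> 6"
  shows "\<exists>xs. is_SOS q 2 xs \<and>
    int (length xs) =
      (if q mod 4 = 0 then (q - 2) * (q - 4) div 2
       else if q mod 4 = 1 then (q - 1) * (q - 5) div 2
       else if q mod 4 = 2 then (q - 2) * (q - 6) div 2
       else (q - 1) * (q - 3) div 2)"
proof -
  define n where "n = nat ((q - 1) div 2)"
  define K where "K = (n - 1) div 2"
  have n: "int n = (q - 1) div 2" "n \<ge> 1"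
    using assms unfolding n_def by linarith+
  have "2 * K < n"
    using n(2) unfolding K_def by presburger
  moreover have "2 * int n < q"
    using n(1) by presburger
  ultimately obtain xs where xs: "is_SOS q 2 xs" "length xs = 4 * n * K"
    using exists_SOS_2_doubled_circulant by blast
  have "int (length xs) = 4 * int n * ((int n - 1) div 2)"
    using xs(2) n(2) by (simp add: K_def zdiv_int of_nat_diff)
  also have "\<dots> =
      (if q mod 4 = 0 then (q - 2) * (q - 4) div 2
       else if q mod 4 = 1 then (q - 1) * (q - 5) div 2
       else if q mod 4 = 2 then (q - 2) * (q - 6) div 2
       else (q - 1) * (q - 3) div 2)"
    unfolding n(1) by (rule period_by_residue_mod_4)
  finally show ?thesis
    using xs(1) by blast
qed

end
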